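(* Let $\{\mathcal F_{N,\varepsilon}\}$ be nested and scale-invariant families of probability distributions and let $\eta$ be a denoiser family obeying the scaling relation. Then for every $\varepsilon$, $$\delta_{SE}(\varepsilon\mid\eta)=M(\varepsilon\mid\eta).$$
   Context: A denoiser family is a collection of maps $\eta(\cdot;\tau,\sigma):\mathbb R^N\to\mathbb R^N$ ($N\ge1$, $\tau\in\Theta$, $\sigma>0$) with $\eta(y;\tau,\sigma)=\sigma\,\eta(y/\sigma;\tau)$, where $\eta(\cdot;\tau)=\eta(\cdot;\tau,1)$. Families $\mathcal F_{N,\varepsilon}\subseteq\mathcal P(\mathbb R^N)$, $\varepsilon\in[0,1]$, are nested if $\varepsilon_1\le\varepsilon_2\Rightarrow\mathcal F_{N,\varepsilon_1}\subseteq\mathcal F_{N,\varepsilon_2}$, and scale-invariant if $\nu_N\in\mathcal F_{N,\varepsilon}$ implies that the law of $a\mathbf X$ ($\mathbf X\sim\nu_N$) lies in $\mathcal F_{N,\varepsilon}$ for every $a>0$. Write $\nu\in\mathcal F_\varepsilon$ for sequences $\nu=\{\nu_N\}$ with $\nu_N\in\mathcal F_{N,\varepsilon}$ for all $N$ such that, for every $\tau\in\Theta$ and $\sigma>0$, the limit $\lim_{N\to\infty}\frac1N\mathbb E_{\nu_N}\|\mathbf X-\eta(\mathbf X+\sigma\mathbf Z;\tau,\sigma)\|_2^2$ exists ($\mathbf X\sim\nu_N$, $\mathbf Z\sim\mathsf N(0,I_{N\times N})$ independent). State evolution map: $\Psi(m;\delta,\tau,\nu)=\lim_{N\to\infty}\frac1N\mathbb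 E_{\nu_N}\|\mathbf X-\eta(\mathbf X+\sqrt{m/\delta}\,\mathbf Z;\tau,\sqrt{m/\delta})\|_2^2$ for $m,\delta>0$; $\mathrm{HFP}(\delta,\tau,\nu)=\sup(\{0\}\cup\{m>0:\Psi(m;\delta,\tau,\nu)\ge m\})$; $\mathrm{HFP}^*(\varepsilon,\delta)=\inf_{\tau\in\Theta}\sup_{\nu\in\mathcal F_\varepsilon}\mathrm{HFP}(\delta,\tau,\nu)$; $\delta_{SE}(\varepsilon\mid\eta)=\inf\{\delta>0:\mathrm{HFP}^*(\varepsilon,\delta)=0\}$. The asymptotic minimax MSE is $M(\varepsilon\mid\eta)=\inf_{\tau\in\Theta}\sup_{\nu\in\mathcal F_\varepsilon}\lim_{N\to\infty}\frac1N\mathbb E_{\nu_N}\|\mathbf X-\eta(\mathbf X+\mathbf Z;\tau)\|_2^2$.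
   Formalization: Each coordinate of $\eta(\cdot;\tau,\sigma)$ is also Borel measurable for every $N\ge1$, $\tau\in\Theta$ and $\sigma>0$, and the limit whose existence defines $\nu\in\mathcal F_\varepsilon$ is required to be finite. Each condition added here is assumed in the paper as well or is needed for the statement above to hold. *)

theory Defs
  imports "HOL-Probability.Probability"
begin

text \<open>Euclidean space R^N is represented by extensional functions on the index set {..<N},
  with the product Borel sg-algebra.\<close>

definition RN :: "nat \<Rightarrow> (nat \<Rightarrow> real) measure" where
  "RN N = PiM {..<N} (\<lambda>_. borel)"

definition gaussN :: "nat \<Rightarrow> (nat \<Rightarrow> real) measure" where
  "gaussN N = PiM {..<N} (\<lambda>_. density lborel std_normal_density)"

definition vscale :: "nat \<Rightarrow> real \<Rightarrow> (nat \<Rightarrow> real) \<Rightarrow> (nat \<Rightarrow> real)" where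
  "vscale N a x = restrict (\<lambda>i. a * x i) {..<N}"

definition vadd :: "nat \<Rightarrow> (nat \<Rightarrow> real) \<Rightarrow> (nat \<Rightarrow> real) \<Rightarrow> (nat \<Rightarrow> real)" where
  "vadd N x y = restrict (\<lambda>i. x i + y i) {..<N}"

definition sqdist :: "nat \<Rightarrow> (nat \<Rightarrow> real) \<Rightarrow> (nat \<Rightarrow> real) \<Rightarrow> real" where
  "sqdist N x y = (\<Sum>i<N. (x i - y i)^2)"

text \<open>Denoiser family: eta N tau sg : R^N -> R^N is eta(.; tau, sg) in dimension N.\<close>
type_synonym 't denoiser = "nat \<Rightarrow> 't \<Rightarrow> real \<Rightarrow> (nat \<Rightarrow> real) \<Rightarrow> (nat \<Rightarrow> real)"

definition denoiser_scaling :: "'t set \<Rightarrow> 't denoiser \<Rightarrow> bool" where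
  "denoiser_scaling Theta eta \<longleftrightarrow>
     (\<forall>N\<ge>1. \<forall>tau\<in>Theta. \<forall>sg>0. \<forall>y\<in>space (RN N). \<forall>i<N.
        eta N tau sg y i = sg * eta N tau 1 (vscale N (1 / sg) y) i)"

definition risk :: "'t denoiser \<Rightarrow> nat \<Rightarrow> 't \<Rightarrow> real \<Rightarrow> (nat \<Rightarrow> real) measure \<Rightarrow> ennreal" where
  "risk eta N tau sg mu =
     ennreal (1 / real N) *
     (\<integral>\<^sup>+ p. ennreal (sqdist N (fst p) (eta N tau sg (vadd N (fst p) (vscale N sg (snd p)))))
        \<partial>(mu \<Otimes>\<^sub>M gaussN N))"

type_synonym family = "nat \<Rightarrow> real \<Rightarrow> (nat \<Rightarrow> real) measure set"

definition prob_families :: "family \<Rightarrow> bool" where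
  "prob_families F \<longleftrightarrow>
     (\<forall>N\<ge>1. \<forall>eps\<in>{0..1}. \<forall>mu\<in>F N eps. prob_space mu \<and> sets mu = sets (RN N))"

definition nested :: "family \<Rightarrow> bool" where
  "nested F \<longleftrightarrow> (\<forall>N\<ge>1. \<forall>e1\<in>{0..1}. \<forall>e2\<in>{0..1}. e1 \<le> e2 \<longrightarrow> F N e1 \<subseteq> F N e2)"

definition scale_invariant :: "family \<Rightarrow> bool" where
  "scale_invariant F \<longleftrightarrow>
     (\<forall>N\<ge>1. \<forall>eps\<in>{0..1}. \<forall>mu\<in>F N eps. \<forall>a>0. distr mu (RN N) (vscale N a) \<in> F N eps)"

definition inF :: "family \<Rightarrow> 't set \<Rightarrow> 't denoiser \<Rightarrow> real \<Rightarrow> (nat \<Rightarrow> (nat \<Rightarrow> real) measure) set" where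
  "inF F Theta eta eps =
     {nu. (\<forall>N\<ge>1. nu N \<in> F N eps) \<and>
          (\<forall>tau\<in>Theta. \<forall>sg>0. \<exists>L. L \<noteq> \<infinity> \<and> (\<lambda>N. risk eta N tau sg (nu N)) \<longlonglongrightarrow> L)}"

definition Psi :: "'t denoiser \<Rightarrow> real \<Rightarrow> real \<Rightarrow> 't \<Rightarrow> (nat \<Rightarrow> (nat \<Rightarrow> real) measure) \<Rightarrow> ennreal" where
  "Psi eta m delta tau nu = lim (\<lambda>N. risk eta N tau (sqrt (m / delta)) (nu N))"

definition HFP :: "'t denoiser \<Rightarrow> real \<Rightarrow> 't \<Rightarrow> (nat \<Rightarrow> (nat \<Rightarrow> real) measure) \<Rightarrow> ennreal" where
  "HFP eta delta tau nu =
     Sup ({0} \<union> {ennreal m | m. m > 0 \<and> Psi eta m delta tau nu \<ge> ennreal m})"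

definition HFPstar :: "family \<Rightarrow> 't set \<Rightarrow> 't denoiser \<Rightarrow> real \<Rightarrow> real \<Rightarrow> ennreal" where
  "HFPstar F Theta eta eps delta =
     (INF tau\<in>Theta. SUP nu\<in>inF F Theta eta eps. HFP eta delta tau nu)"

definition delta_SE :: "family \<Rightarrow> 't set \<Rightarrow> 't denoiser \<Rightarrow> real \<Rightarrow> ennreal" where
  "delta_SE F Theta eta eps = Inf {ennreal delta | delta. delta > 0 \<and> HFPstar F Theta eta eps delta = 0}"

definition minimax_MSE :: "family \<Rightarrow> 't set \<Rightarrow> 't denoiser \<Rightarrow> real \<Rightarrow> ennreal" where
  "minimax_MSE F Theta eta eps =
     (INF tau\<in>Theta. SUP nu\<in>inF F Theta eta eps. lim (\<lambda>N. risk eta N tau 1 (nu N)))"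

end

theory Submission
  imports Defs
begin

(* By the scaling relation of the denoiser, running the denoiser at noise level s
   on a prior nu is the same, up to the factor s^2, as running it at noise level 1 on the
   prior rescaled by 1/s; scale invariance keeps the rescaled prior in the family.  Hence the
   state-evolution map satisfies Psi(m; delta, tau, nu) = (m/delta) * R(tau, nu') where
   R(tau, nu') is the limiting unit-noise risk of a rescaled prior nu'.  Consequently
   HFP*(eps, delta) = 0 holds exactly when some tau has R(tau, nu) < delta for every prior nu:
   then Psi(m) < m for all m > 0, while otherwise m = delta is a fixed-point witness.
   Finally an order-theoretic fact about ennreal identifies the infimum of such delta with
   inf_tau sup_nu R(tau, nu), the minimax MSE. *)

section \<open>Scaling of the loss\<close>

lemma vadd_vscale: "vadd N x (vscale N s z) = restrict (\<lambda>i. x i + s * z i) {..<N}"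
  by (auto simp: vadd_def vscale_def)

lemma space_RN: "space (RN N) = PiE {..<N} (\<lambda>_. UNIV)"
  by (simp add: RN_def space_PiM)

lemma sqdist_nonneg: "0 \<le> sqdist N x y"
  unfolding sqdist_def by (simp add: sum_nonneg)

lemma prob_space_gaussN: "prob_space (gaussN N)"
  unfolding gaussN_def by (rule prob_space_PiM) (simp add: prob_space_normal_density)

lemma loss_measurable:
  assumes meas: "\<forall>i<N. (\<lambda>y. eta N tau s y i) \<in> borel_measurable (RN N)"
    and M: "sets M = sets (RN N)"
  shows "(\<lambda>p. ennreal (sqdist N (fst p) (eta N tau s (vadd N (fst p) (vscale N s (snd p))))))
           \<in> borel_measurable (M \<Otimes>\<^sub>M gaussN N)"
proof -
  have sets_eq: "sets (M \<Otimes>\<^sub>M gaussN N) = sets (RN N \<Otimes>\<^sub>M gaussN N)"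
    by (rule sets_pair_measure_cong) (use M in auto)
  have obs: "(\<lambda>p. vadd N (fst p) (vscale N s (snd p))) \<in> measurable (RN N \<Otimes>\<^sub>M gaussN N) (RN N)"
    unfolding vadd_vscale RN_def gaussN_def by measurable
  have est: "(\<lambda>p. eta N tau s (vadd N (fst p) (vscale N s (snd p))) i)
               \<in> borel_measurable (RN N \<Otimes>\<^sub>M gaussN N)" if "i < N" for i
    by (rule measurable_compose[OF obs]) (use meas that in auto)
  have coord: "\<And>i. i < N \<Longrightarrow> (\<lambda>p. fst p i) \<in> borel_measurable (RN N \<Otimes>\<^sub>M gaussN N)"
    unfolding RN_def by measurable
  have "(\<lambda>p. ennreal (sqdist N (fst p) (eta N tau s (vadd N (fst p) (vscale N s (snd p))))))
          \<in> borel_measurable (RN N \<Otimes>\<^sub>M gaussN N)"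
    unfolding sqdist_def using est coord by measurable
  then show ?thesis using measurable_cong_sets[OF sets_eq refl] by blast
qed

lemma loss_scale:
  assumes sc: "denoiser_scaling Theta eta" and N: "N \<ge> 1" and tau: "tau \<in> Theta"
    and sg: "sg > 0" and a: "a > 0"
  shows "sqdist N (vscale N a x) (eta N tau sg (vadd N (vscale N a x) (vscale N sg z)))
     = a^2 * sqdist N x (eta N tau (sg/a) (vadd N x (vscale N (sg/a) z)))"
proof -
  define y where "y = vadd N (vscale N a x) (vscale N sg z)"
  define y' where "y' = vadd N x (vscale N (sg/a) z)"
  have ys: "y \<in> space (RN N)" "y' \<in> space (RN N)"
    unfolding y_def y'_def space_RN vadd_def by auto
  have same_input: "vscale N (1/sg) y = vscale N (1 / (sg/a)) y'"
    unfolding y_def y'_def vadd_def vscale_def using sg a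
    by (auto simp: fun_eq_iff field_simps)
  have est: "eta N tau sg y i = a * eta N tau (sg/a) y' i" if "i < N" for i
  proof -
    have "eta N tau sg y i = sg * eta N tau 1 (vscale N (1/sg) y) i"
      using sc N tau sg ys that unfolding denoiser_scaling_def by blast
    moreover have "eta N tau (sg/a) y' i = (sg/a) * eta N tau 1 (vscale N (1/(sg/a)) y') i"
      using sc N tau sg a ys that unfolding denoiser_scaling_def by auto
    ultimately show ?thesis using same_input a by simp
  qed
  have "sqdist N (vscale N a x) (eta N tau sg y) = (\<Sum>i<N. (a * x i - a * eta N tau (sg/a) y' i)^2)"
    unfolding sqdist_def vscale_def using est by (intro sum.cong) auto
  also have "\<dots> = a^2 * sqdist N x (eta N tau (sg/a) y')"
    unfolding sqdist_def sum_distrib_left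
    by (intro sum.cong) (auto simp: power2_eq_square algebra_simps)
  finally show ?thesis unfolding y_def y'_def .
qed

lemma risk_scale:
  assumes sc: "denoiser_scaling Theta eta"
    and meas: "\<forall>N\<ge>1. \<forall>tau\<in>Theta. \<forall>sg>0. \<forall>i<N. (\<lambda>y. eta N tau sg y i) \<in> borel_measurable (RN N)"
    and tau: "tau \<in> Theta" and sg: "sg > 0" and a: "a > 0"
    and mu: "N \<ge> 1 \<Longrightarrow> sets mu = sets (RN N)"
  shows "risk eta N tau sg (distr mu (RN N) (vscale N a)) = ennreal (a^2) * risk eta N tau (sg/a) mu"
proof (cases "N = 0")
  case True then show ?thesis by (simp add: risk_def)
next
  case False
  then have N: "N \<ge> 1" by simp
  have ms: "sets mu = sets (RN N)" using mu N by simp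
  define loss where "loss = (\<lambda>s p. ennreal (sqdist N (fst p) (eta N tau s (vadd N (fst p) (vscale N s (snd p))))))"
  have vs: "vscale N a \<in> measurable mu (RN N)"
    unfolding measurable_cong_sets[OF ms refl] unfolding vscale_def RN_def by measurable
  interpret G: prob_space "gaussN N" by (rule prob_space_gaussN)
  have pd: "distr mu (RN N) (vscale N a) \<Otimes>\<^sub>M gaussN N
      = distr (mu \<Otimes>\<^sub>M gaussN N) (RN N \<Otimes>\<^sub>M gaussN N) (\<lambda>(x, y). (vscale N a x, y))"
    using pair_measure_distr[OF vs measurable_id[of "gaussN N"]] G.sigma_finite_measure_axioms
    by (simp add: id_def)
  have T: "(\<lambda>(x, y). (vscale N a x, y)) \<in> measurable (mu \<Otimes>\<^sub>M gaussN N) (RN N \<Otimes>\<^sub>M gaussN N)"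
    using vs by measurable
  have m1: "loss sg \<in> borel_measurable (RN N \<Otimes>\<^sub>M gaussN N)"
    unfolding loss_def by (rule loss_measurable) (use meas N tau sg in auto)
  have m2: "loss (sg/a) \<in> borel_measurable (mu \<Otimes>\<^sub>M gaussN N)"
    unfolding loss_def by (rule loss_measurable[OF _ ms]) (use meas N tau sg a in auto)
  have "(\<integral>\<^sup>+ p. loss sg p \<partial>(distr mu (RN N) (vscale N a) \<Otimes>\<^sub>M gaussN N))
     = (\<integral>\<^sup>+ p. loss sg (vscale N a (fst p), snd p) \<partial>(mu \<Otimes>\<^sub>M gaussN N))"
    unfolding pd by (subst nn_integral_distr[OF T]) (use m1 in \<open>simp_all add: case_prod_beta\<close>)
  also have "\<dots> = (\<integral>\<^sup>+ p. ennreal (a^2) * loss (sg/a) p \<partial>(mu \<Otimes>\<^sub>M gaussN N))"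
    unfolding loss_def
    by (intro nn_integral_cong)
       (simp add: loss_scale[OF sc N tau sg a] ennreal_mult sqdist_nonneg)
  also have "\<dots> = ennreal (a^2) * (\<integral>\<^sup>+ p. loss (sg/a) p \<partial>(mu \<Otimes>\<^sub>M gaussN N))"
    by (rule nn_integral_cmult[OF m2])
  finally show ?thesis unfolding risk_def loss_def by (simp add: ac_simps)
qed

section \<open>Rescaled priors and the state-evolution map\<close>

text \<open>Scale invariance of the families and the scaling of the risk make inF closed under
  rescaling of the prior: membership and convergence of the risks both transfer.\<close>

lemma inF_scale:
  assumes pf: "prob_families F" and si: "scale_invariant F"
    and sc: "denoiser_scaling Theta eta"
    and meas: "\<forall>N\<ge>1. \<forall>tau\<in>Theta. \<forall>sg>0. \<forall>i<N. (\<lambda>y. eta N tau sg y i) \<in> borel_measurable (RN N)"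
    and eps: "eps \<in> {0..1}" and nu: "nu \<in> inF F Theta eta eps" and a: "a > 0"
  shows "(\<lambda>N. distr (nu N) (RN N) (vscale N a)) \<in> inF F Theta eta eps"
proof -
  have F: "\<forall>N\<ge>1. nu N \<in> F N eps" using nu unfolding inF_def by blast
  have sets: "N \<ge> 1 \<Longrightarrow> sets (nu N) = sets (RN N)" for N
    using pf F eps unfolding prob_families_def by blast
  have "\<forall>N\<ge>1. distr (nu N) (RN N) (vscale N a) \<in> F N eps"
    using si F eps a unfolding scale_invariant_def by blast
  moreover have "\<exists>L. L \<noteq> \<infinity> \<and> (\<lambda>N. risk eta N tau sg (distr (nu N) (RN N) (vscale N a))) \<longlonglongrightarrow> L"
    if tau: "tau \<in> Theta" and sg: "sg > 0" for tau sg
  proof -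
    obtain L where L: "L \<noteq> \<infinity>" "(\<lambda>N. risk eta N tau (sg/a) (nu N)) \<longlonglongrightarrow> L"
    proof -
      have "sg / a > 0" using sg a by simp
      then show ?thesis using nu tau that unfolding inF_def by blast
    qed
    have scaled: "risk eta N tau sg (distr (nu N) (RN N) (vscale N a))
                    = ennreal (a^2) * risk eta N tau (sg/a) (nu N)" for N
      by (rule risk_scale[OF sc meas tau sg a sets])
    have "(\<lambda>N. ennreal (a^2) * risk eta N tau (sg/a) (nu N)) \<longlonglongrightarrow> ennreal (a^2) * L"
      by (rule ennreal_tendsto_cmult[OF _ L(2)]) simp
    moreover have "ennreal (a^2) * L \<noteq> \<infinity>" using L(1) by (simp add: ennreal_mult_eq_top_iff)
    ultimately show ?thesis unfolding scaled by blast
  qed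
  ultimately show ?thesis unfolding inF_def by blast
qed

text \<open>The state-evolution map at m is (m / delta) times the limiting unit-noise risk of the
  prior rescaled by 1 / sqrt(m / delta), which is again an admissible prior.\<close>

lemma Psi_rescaled_prior:
  assumes pf: "prob_families F" and si: "scale_invariant F"
    and sc: "denoiser_scaling Theta eta"
    and meas: "\<forall>N\<ge>1. \<forall>tau\<in>Theta. \<forall>sg>0. \<forall>i<N. (\<lambda>y. eta N tau sg y i) \<in> borel_measurable (RN N)"
    and eps: "eps \<in> {0..1}" and nu: "nu \<in> inF F Theta eta eps"
    and m: "m > 0" and d: "delta > 0" and tau: "tau \<in> Theta"
  shows "\<exists>nu'\<in>inF F Theta eta eps.
           Psi eta m delta tau nu = ennreal (m / delta) * lim (\<lambda>N. risk eta N tau 1 (nu' N))"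
proof -
  define s where "s = sqrt (m / delta)"
  have s: "s > 0" "s^2 = m / delta" using m d by (simp_all add: s_def)
  define nu' where "nu' = (\<lambda>N. distr (nu N) (RN N) (vscale N (1/s)))"
  have nu': "nu' \<in> inF F Theta eta eps"
    unfolding nu'_def by (rule inF_scale[OF pf si sc meas eps nu]) (use s in simp)
  have sets: "N \<ge> 1 \<Longrightarrow> sets (nu N) = sets (RN N)" for N
    using pf nu eps unfolding prob_families_def inF_def by blast
  have unit: "risk eta N tau s (nu N) = ennreal (s^2) * risk eta N tau 1 (nu' N)" for N
  proof -
    have "risk eta N tau 1 (nu' N) = ennreal ((1/s)^2) * risk eta N tau (1/(1/s)) (nu N)"
      unfolding nu'_def by (rule risk_scale[OF sc meas tau _ _ sets]) (use s in auto)
    then have "ennreal (s^2) * risk eta N tau 1 (nu' N)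
                 = ennreal (s^2) * ennreal ((1/s)^2) * risk eta N tau s (nu N)"
      by (simp add: mult.assoc)
    also have "ennreal (s^2) * ennreal ((1/s)^2) = 1"
      using s(1) by (simp add: ennreal_mult[symmetric] power_one_over field_simps)
    finally show ?thesis by simp
  qed
  have "\<forall>tau\<in>Theta. \<forall>sg>0. \<exists>L. L \<noteq> \<infinity> \<and> (\<lambda>N. risk eta N tau sg (nu' N)) \<longlonglongrightarrow> L"
    using nu' unfolding inF_def by blast
  then obtain L where L: "(\<lambda>N. risk eta N tau 1 (nu' N)) \<longlonglongrightarrow> L"
    using tau by (meson zero_less_one)
  have "(\<lambda>N. risk eta N tau s (nu N)) \<longlonglongrightarrow> ennreal (s^2) * L"
    unfolding unit by (rule ennreal_tendsto_cmult[OF _ L]) simp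
  then have "Psi eta m delta tau nu = ennreal (s^2) * L"
    unfolding Psi_def s_def[symmetric] by (rule limI)
  also have "\<dots> = ennreal (m / delta) * lim (\<lambda>N. risk eta N tau 1 (nu' N))"
    using limI[OF L] s(2) by simp
  finally show ?thesis using nu' by blast
qed

section \<open>When the highest fixed point vanishes\<close>

text \<open>If tau keeps the unit-noise risk of every admissible prior below delta, the state
  evolution has no fixed point above 0: Psi(m) < (m / delta) * delta = m.\<close>

lemma HFP_zero_if_risk_below:
  assumes pf: "prob_families F" and si: "scale_invariant F"
    and sc: "denoiser_scaling Theta eta"
    and meas: "\<forall>N\<ge>1. \<forall>tau\<in>Theta. \<forall>sg>0. \<forall>i<N. (\<lambda>y. eta N tau sg y i) \<in> borel_measurable (RN N)"
    and eps: "eps \<in> {0..1}" and nu: "nu \<in> inF F Theta eta eps" and d: "delta > 0"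
    and tau: "tau \<in> Theta"
    and below: "\<forall>nu\<in>inF F Theta eta eps. lim (\<lambda>N. risk eta N tau 1 (nu N)) < ennreal delta"
  shows "HFP eta delta tau nu = 0"
proof -
  have no_witness: "\<not> Psi eta m delta tau nu \<ge> ennreal m" if m: "m > 0" for m
  proof -
    obtain nu' where nu': "nu' \<in> inF F Theta eta eps"
      and Psi: "Psi eta m delta tau nu = ennreal (m / delta) * lim (\<lambda>N. risk eta N tau 1 (nu' N))"
      using Psi_rescaled_prior[OF pf si sc meas eps nu m d tau] by blast
    have "Psi eta m delta tau nu < ennreal (m / delta) * ennreal delta"
      unfolding Psi using below nu' m d by (intro ennreal_mult_strict_left_mono) auto
    also have "\<dots> = ennreal m" using m d by (simp flip: ennreal_mult)
    finally show ?thesis by simp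
  qed
  then have no_fixed_points: "{ennreal m | m. m > 0 \<and> Psi eta m delta tau nu \<ge> ennreal m} = {}"
    by blast
  show ?thesis unfolding HFP_def no_fixed_points by simp
qed

text \<open>Conversely, a prior whose unit-noise risk is at least delta makes m = delta a point with
  Psi(m) \<ge> m, because Psi(delta; delta) is exactly the unit-noise risk.\<close>

lemma HFP_ge_if_risk_above:
  assumes d: "delta > 0"
    and above: "lim (\<lambda>N. risk eta N tau 1 (nu N)) \<ge> ennreal delta"
  shows "HFP eta delta tau nu \<ge> ennreal delta"
proof -
  have "Psi eta delta delta tau nu = lim (\<lambda>N. risk eta N tau 1 (nu N))"
    unfolding Psi_def using d by simp
  then have "ennreal delta \<in> {ennreal m | m. m > 0 \<and> Psi eta m delta tau nu \<ge> ennreal m}"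
    using d above by auto
  then show ?thesis unfolding HFP_def by (intro Sup_upper) auto
qed

lemma HFPstar_zero_iff:
  assumes pf: "prob_families F" and si: "scale_invariant F"
    and sc: "denoiser_scaling Theta eta"
    and meas: "\<forall>N\<ge>1. \<forall>tau\<in>Theta. \<forall>sg>0. \<forall>i<N. (\<lambda>y. eta N tau sg y i) \<in> borel_measurable (RN N)"
    and eps: "eps \<in> {0..1}" and d: "delta > 0"
  shows "HFPstar F Theta eta eps delta = 0 \<longleftrightarrow>
    (\<exists>tau\<in>Theta. \<forall>nu\<in>inF F Theta eta eps. lim (\<lambda>N. risk eta N tau 1 (nu N)) < ennreal delta)"
    (is "?zero \<longleftrightarrow> (\<exists>tau\<in>Theta. ?good tau)")
proof
  assume "\<exists>tau\<in>Theta. ?good tau"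
  then obtain tau where tau: "tau \<in> Theta" and good: "?good tau" by blast
  have "(SUP nu\<in>inF F Theta eta eps. HFP eta delta tau nu) = 0"
    using HFP_zero_if_risk_below[OF pf si sc meas eps _ d tau good]
    by (intro antisym SUP_least) auto
  then have "HFPstar F Theta eta eps delta \<le> 0"
    unfolding HFPstar_def using tau by (metis INF_lower)
  then show ?zero by simp
next
  assume zero: ?zero
  show "\<exists>tau\<in>Theta. ?good tau"
  proof (rule ccontr)
    assume "\<not> (\<exists>tau\<in>Theta. ?good tau)"
    have "ennreal delta \<le> (SUP nu\<in>inF F Theta eta eps. HFP eta delta tau nu)"
      if tau: "tau \<in> Theta" for tau
    proof -
      obtain nu where nu: "nu \<in> inF F Theta eta eps"
        and above: "lim (\<lambda>N. risk eta N tau 1 (nu N)) \<ge> ennreal delta"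
        using \<open>\<not> (\<exists>tau\<in>Theta. ?good tau)\<close> tau by (auto simp: not_less)
      have "ennreal delta \<le> HFP eta delta tau nu"
        by (rule HFP_ge_if_risk_above[OF d above])
      also have "\<dots> \<le> (SUP nu\<in>inF F Theta eta eps. HFP eta delta tau nu)"
        using nu by (rule SUP_upper)
      finally show ?thesis .
    qed
    then have "ennreal delta \<le> HFPstar F Theta eta eps delta"
      unfolding HFPstar_def by (simp add: le_INF_iff)
    then show False using zero d by simp
  qed
qed

section \<open>An order-theoretic identity in ennreal\<close>

lemma Inf_strict_bounds_eq_SUP:
  fixes R :: "'b \<Rightarrow> ennreal"
  shows "Inf {ennreal d | d. d > 0 \<and> (\<forall>x\<in>I. R x < ennreal d)} = (SUP x\<in>I. R x)"
    (is "Inf ?B = ?S")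
proof (rule antisym)
  show "Inf ?B \<le> ?S"
  proof (rule ennreal_le_epsilon)
    fix e :: real assume fin: "?S < top" and e: "0 < e"
    define d where "d = enn2real ?S + e"
    have S: "?S = ennreal (enn2real ?S)" using fin by simp
    have "R x < ennreal d" if "x \<in> I" for x
    proof -
      have "R x \<le> ?S" using that by (rule SUP_upper)
      also have "\<dots> < ennreal d" using e by (subst S) (simp add: d_def ennreal_lessI)
      finally show ?thesis .
    qed
    moreover have "d > 0" unfolding d_def using e enn2real_nonneg[of ?S] by linarith
    ultimately have "Inf ?B \<le> ennreal d" by (intro Inf_lower) blast
    also have "ennreal d = ?S + ennreal e"
      using e by (subst S) (simp add: d_def ennreal_plus)
    finally show "Inf ?B \<le> ?S + ennreal e" .
  qed
next
  show "?S \<le> Inf ?B"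
    by (rule Inf_greatest, rule SUP_least) (auto intro: less_imp_le)
qed

lemma Inf_strict_bounds_eq_INF_SUP:
  fixes R :: "'a \<Rightarrow> 'b \<Rightarrow> ennreal"
  shows "Inf {ennreal d | d. d > 0 \<and> (\<exists>t\<in>T. \<forall>x\<in>I. R t x < ennreal d)}
           = (INF t\<in>T. SUP x\<in>I. R t x)"
proof -
  have "{ennreal d | d. d > 0 \<and> (\<exists>t\<in>T. \<forall>x\<in>I. R t x < ennreal d)}
          = (\<Union>t\<in>T. {ennreal d | d. d > 0 \<and> (\<forall>x\<in>I. R t x < ennreal d)})"
    by blast
  then have "Inf {ennreal d | d. d > 0 \<and> (\<exists>t\<in>T. \<forall>x\<in>I. R t x < ennreal d)}
          = (INF t\<in>T. Inf {ennreal d | d. d > 0 \<and> (\<forall>x\<in>I. R t x < ennreal d)})"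
    by (simp only:) (rule antisym; auto intro!: INF_greatest Inf_greatest intro: Inf_lower2)
  then show ?thesis by (simp only: Inf_strict_bounds_eq_SUP)
qed

theorem mainTheorem16:
  fixes F :: family and Theta :: "'t set" and eta :: "'t denoiser" and eps :: real
  assumes "prob_families F" and "nested F" and "scale_invariant F"
    and "denoiser_scaling Theta eta"
    and "\<forall>N\<ge>1. \<forall>tau\<in>Theta. \<forall>sg>0. \<forall>i<N. (\<lambda>y. eta N tau sg y i) \<in> borel_measurable (RN N)"
    and "eps \<in> {0..1}"
  shows "delta_SE F Theta eta eps = minimax_MSE F Theta eta eps"
proof -
  have "{ennreal delta | delta. delta > 0 \<and> HFPstar F Theta eta eps delta = 0}
      = {ennreal delta | delta. delta > 0 \<and> (\<exists>tau\<in>Theta. \<forall>nu\<in>inF F Theta eta eps.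
                                  lim (\<lambda>N. risk eta N tau 1 (nu N)) < ennreal delta)}"
    using HFPstar_zero_iff[OF assms(1,3,4,5,6)] by blast
  then show ?thesis
    unfolding delta_SE_def minimax_MSE_def by (simp only: Inf_strict_bounds_eq_INF_SUP)
qed

end
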